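(* Let $T\ge1$, $n\ge2$, $\mu\in\mathbb{R}$, $\sigma>0$, $z^*\in\mathbb{R}$, $\tau\in\{1,\dots,T\}$. Under $\mathbf{H_0}$ the real numbers $X_{t,k}$ ($t\le T$, $k\le n$) are i.i.d. $\mathcal{N}(\mu,\sigma^2)$; under $\mathbf{H_1^\tau}$ they are generated the same way and then $X_{\tau,J}$ is replaced by $z^*$, with $J$ uniform on $\{1,\dots,n\}$ independent of the data. Let $\bar X_\tau=\frac1n\sum_{k=1}^nX_{\tau,k}$ and \[ \log\mathrm{LR}_\tau=-\frac12\log\Big(\frac{n-1}{n}\Big)-\frac{n}{2(n-1)\sigma^2}(\bar X_\tau-\mu)^2+\frac{(z^*-\mu)n}{(n-1)\sigma^2}(\bar X_\tau-\mu)-\frac{(z^*-\mu)^2}{2(n-1)\sigma^2}. \] For $\gamma\in\mathbb{R}$ let $\beta(\gamma)=\mathbb{P}_{\mathbf{H_1^\tau}}(\log\mathrm{LR}_\tau<\gamma)$. Define $\gamma_{\max}=\frac12\big[\frac{(z^*-\mu)^2}{\sigma^2}-\log\big(\frac{n-1}{n}\big)\big]$, $m^*=\frac{(z^*-\mu)^2}{\sigma^2}$, $a=\sqrt{m^*n}$ and $b(\gamma)=\sqrt{(n-1)\big(m^*-\log(1-\frac1n)-2\gamma\big)}$. Then for every $\gamma\le\gamma_{\max}$, \[ \beta(\gamma)=\Phi\Big(a\sqrt{\tfrac{n-1}{n}}-b(\gamma)\sqrt{\tfrac{n}{n-1}}\Big)+\Phi\Big(-a\sqrt{\tfrac{n-1}{n}}-b(\gamma)\sqrt{\tfrac{n}{n-1}}\Big),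 \] where $\Phi$ is the standard normal cumulative distribution function.
   Context: $\beta(\gamma)$ is the Type II error of the test that declares "target present" when $\log\mathrm{LR}_\tau\ge\gamma$. *)

theory Defs
  imports "HOL-Probability.Probability"
begin

definition Phi :: "real \<Rightarrow> real" where
  "Phi x = measure (density lborel std_normal_density) {..x}"

definition idx :: "nat \<Rightarrow> nat \<Rightarrow> (nat \<times> nat) set" where
  "idx T n = {1..T} \<times> {1..n}"

definition H0 :: "nat \<Rightarrow> nat \<Rightarrow> real \<Rightarrow> real \<Rightarrow> ((nat \<times> nat) \<Rightarrow> real) measure" where
  "H0 T n mu sg = PiM (idx T n) (\<lambda>_. density lborel (normal_density mu sg))"

definition H1 :: "nat \<Rightarrow> nat \<Rightarrow> real \<Rightarrow> real \<Rightarrow> real \<Rightarrow> nat \<Rightarrow> ((nat \<times> nat) \<Rightarrow> real) measure" where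
  "H1 T n mu sg zstar tau =
     distr (H0 T n mu sg \<Otimes>\<^sub>M measure_pmf (pmf_of_set {1..n}))
           (PiM (idx T n) (\<lambda>_. borel))
           (\<lambda>(x, j). x((tau, j) := zstar))"

definition Xbar :: "nat \<Rightarrow> nat \<Rightarrow> ((nat \<times> nat) \<Rightarrow> real) \<Rightarrow> real" where
  "Xbar n tau x = (\<Sum>k = 1..n. x (tau, k)) / real n"

definition logLR :: "nat \<Rightarrow> real \<Rightarrow> real \<Rightarrow> real \<Rightarrow> nat \<Rightarrow> ((nat \<times> nat) \<Rightarrow> real) \<Rightarrow> real" where
  "logLR n mu sg zstar tau x =
     - 1/2 * ln ((real n - 1) / real n)
     - real n / (2 * (real n - 1) * sg\<^sup>2) * (Xbar n tau x - mu)\<^sup>2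
     + (zstar - mu) * real n / ((real n - 1) * sg\<^sup>2) * (Xbar n tau x - mu)
     - (zstar - mu)\<^sup>2 / (2 * (real n - 1) * sg\<^sup>2)"

definition typeII_err :: "nat \<Rightarrow> nat \<Rightarrow> real \<Rightarrow> real \<Rightarrow> real \<Rightarrow> nat \<Rightarrow> real \<Rightarrow> real" where
  "typeII_err T n mu sg zstar tau gamma =
     measure (H1 T n mu sg zstar tau)
       {x \<in> space (H1 T n mu sg zstar tau). logLR n mu sg zstar tau x < gamma}"

end

(* Given J = j, row tau consists of zstar at position j and n - 1 i.i.d. N(mu, sg^2) entries
   with sum S. Completing the square in the row mean gives
     logLR = - ln((n-1)/n)/2 + mstar/2 - (W - c)^2 / (2n),
   where W = (S - (n-1) mu) / (sg sqrt(n-1)) is standard normal and c = sqrt(n-1) (zstar - mu) / sg.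
   Hence logLR < gamma iff |W - c| > r := sqrt(n (mstar - ln((n-1)/n) - 2 gamma)), an event of
   probability Phi(c - r) + Phi(-c - r), the same for every j; averaging over J gives beta(gamma).
   In the statement, a sqrt((n-1)/n) = |c| and b sqrt(n/(n-1)) = r. *)

theory Submission
  imports Defs
begin

lemma measure_std_normal_singleton: "measure std_normal_distribution {x} = 0"
proof -
  have "AE y in lborel. y \<in> {x} \<longrightarrow> std_normal_density y = 0"
    by (rule AE_I'[where N = "{x}"]) auto
  then have "{x} \<in> null_sets std_normal_distribution"
    by (simp add: null_sets_density_iff)
  then show ?thesis
    by (simp add: measure_def null_setsD1)
qed

lemma Phi_eq_measure_lessThan: "Phi x = measure std_normal_distribution {..<x}"
proof -
  interpret real_distribution std_normal_distribution
    by (rule real_dist_normal_dist)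
  have "{..x} = {..<x} \<union> {x}"
    by auto
  then have "Phi x = measure std_normal_distribution ({..<x} \<union> {x})"
    unfolding Phi_def by simp
  also have "\<dots> = measure std_normal_distribution {..<x}"
    by (subst finite_measure_Union) (auto simp: measure_std_normal_singleton)
  finally show ?thesis .
qed

lemma distr_std_normal_uminus: "distr std_normal_distribution lborel uminus = std_normal_distribution"
proof -
  interpret prob_space std_normal_distribution
    by (rule prob_space_normal_density) simp
  have "distributed std_normal_distribution lborel (\<lambda>x. x) std_normal_density"
    unfolding distributed_def by (simp add: distr_id2)
  then have "distributed std_normal_distribution lborel (\<lambda>x. 0 + (-1) * x)
      (normal_density (0 + (-1) * 0) (\<bar>-1\<bar> * 1))"
    by (rule normal_density_affine) simp_all
  then show ?thesis
    unfolding distributed_def by (simp add: fun_eq_iff comp_def)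
qed

lemma Phi_minus_eq_measure_greaterThan: "Phi (- x) = measure std_normal_distribution {x<..}"
proof -
  interpret real_distribution std_normal_distribution
    by (rule real_dist_normal_dist)
  have "Phi (- x) = measure (distr std_normal_distribution lborel uminus) {..-x}"
    unfolding Phi_def distr_std_normal_uminus ..
  also have "\<dots> = measure std_normal_distribution ({x<..} \<union> {x})"
    by (subst measure_distr) (auto intro!: arg_cong[where f = "measure _"])
  also have "\<dots> = measure std_normal_distribution {x<..}"
    by (subst finite_measure_Union) (auto simp: measure_std_normal_singleton)
  finally show ?thesis .
qed

lemma measure_std_normal_abs_greater:
  assumes "r \<ge> 0"
  shows "measure std_normal_distribution {w. r < \<bar>w - c\<bar>} = Phi (c - r) + Phi (- c - r)"
proof -
  interpret real_distribution std_normal_distribution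
    by (rule real_dist_normal_dist)
  have "{w. r < \<bar>w - c\<bar>} = {..<c - r} \<union> {c + r<..}"
    by auto
  moreover have "{..<c - r} \<inter> {c + r<..} = {}"
    using assms by auto
  ultimately have "measure std_normal_distribution {w. r < \<bar>w - c\<bar>}
      = measure std_normal_distribution {..<c - r} + measure std_normal_distribution {c + r<..}"
    by (simp add: finite_measure_Union)
  moreover have "Phi (- c - r) = measure std_normal_distribution {c + r<..}"
    using Phi_minus_eq_measure_greaterThan[of "c + r"] by simp
  ultimately show ?thesis
    by (simp only: Phi_eq_measure_lessThan[of "c - r"])
qed

(* The map (x, j) |-> x((tau, j) := zstar) defining H1 is not measurable into the product space:
   for j outside {1..n} it leaves the extensional functions. Preimages of measurable sets are
   still measurable, which is all the pushforward needs. *)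
lemma emeasure_distr_of_measurable_preimages:
  assumes preimages: "\<And>A. A \<in> sets N \<Longrightarrow> f -` A \<inter> space M \<in> sets M" and A: "A \<in> sets N"
  shows "emeasure (distr M N f) A = emeasure M (f -` A \<inter> space M)"
  unfolding distr_def
proof (rule emeasure_measure_of_sigma)
  show "countably_additive (sets N) (\<lambda>A. emeasure M (f -` A \<inter> space M))"
  proof (rule countably_additiveI)
    fix B :: "nat \<Rightarrow> _" assume B: "range B \<subseteq> sets N" "disjoint_family B"
    have "range (\<lambda>i. f -` B i \<inter> space M) \<subseteq> sets M"
      using B preimages by auto
    moreover have "disjoint_family (\<lambda>i. f -` B i \<inter> space M)"
      using B by (auto simp: disjoint_family_on_def)
    ultimately show "(\<Sum>i. emeasure M (f -` B i \<inter> space M)) = emeasure M (f -` (\<Union>i. B i) \<inter> space M)"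
      by (subst suminf_emeasure) (auto simp: vimage_UN)
  qed
qed (auto simp: positive_def A sets.sigma_algebra_axioms)

lemma sets_PiM_fun_upd_preimage:
  assumes A: "A \<in> sets (PiM I M)" and z: "i \<in> I \<Longrightarrow> z \<in> space (M i)"
  shows "{x \<in> space (PiM I M). x(i := z) \<in> A} \<in> sets (PiM I M)"
proof (cases "i \<in> I")
  case True
  have "(\<lambda>x. x(i := z)) \<in> PiM I M \<rightarrow>\<^sub>M PiM I M"
    using True z by (intro measurable_fun_upd[where J = I]) auto
  then show ?thesis using A by measurable
next
  case False
  have undef: "y i = undefined" if "y \<in> space (PiM I M)" for y
    using that False by (auto simp: space_PiM PiE_def extensional_def)
  have "{x \<in> space (PiM I M). x(i := z) \<in> A} = (if z = undefined then A else {})"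
    using sets.sets_into_space[OF A] undef[of "_(i := z)"] by (auto simp: undef fun_upd_idem)
  then show ?thesis using A by simp
qed

lemma measure_distr_fun_upd_uniform:
  fixes P :: "('i \<Rightarrow> 'a) measure" and f :: "'j::countable \<Rightarrow> 'i"
  assumes P: "prob_space P" "sets P = sets (PiM I M)"
    and z: "\<And>j. f j \<in> I \<Longrightarrow> z \<in> space (M (f j))"
    and J: "finite J" "J \<noteq> {}"
    and E: "E \<in> sets (PiM I M)"
  shows "measure (distr (P \<Otimes>\<^sub>M measure_pmf (pmf_of_set J)) (PiM I M) (\<lambda>(x, j). x(f j := z))) E
       = (\<Sum>j\<in>J. measure P {x \<in> space P. x(f j := z) \<in> E}) / card J"
proof -
  let ?Q = "measure_pmf (pmf_of_set J)"
  let ?g = "\<lambda>(x, j). x(f j := z)"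
  interpret P: prob_space P by (rule P(1))
  interpret pair_sigma_finite P ?Q
    by (simp add: pair_sigma_finite_def P.sigma_finite_measure_axioms
        prob_space_imp_sigma_finite[OF prob_space_measure_pmf])
  have spP: "space P = space (PiM I M)"
    using P(2) by (rule sets_eq_imp_space_eq)
  have preimage: "?g -` A \<inter> space (P \<Otimes>\<^sub>M ?Q) \<in> sets (P \<Otimes>\<^sub>M ?Q)" if A: "A \<in> sets (PiM I M)" for A
  proof -
    have "Measurable.pred (P \<Otimes>\<^sub>M ?Q) (\<lambda>\<omega>. (fst \<omega>)(f (snd \<omega>) := z) \<in> A)"
    proof (rule measurable_compose_countable[where f = "\<lambda>j \<omega>. (fst \<omega>)(f j := z) \<in> A" and g = snd])
      fix j
      have "Measurable.pred P (\<lambda>x. x(f j := z) \<in> A)"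
        using sets_PiM_fun_upd_preimage[OF A z] P(2) spP by (simp add: pred_def)
      then show "Measurable.pred (P \<Otimes>\<^sub>M ?Q) (\<lambda>\<omega>. (fst \<omega>)(f j := z) \<in> A)"
        by measurable
    next
      show "snd \<in> P \<Otimes>\<^sub>M ?Q \<rightarrow>\<^sub>M count_space UNIV"
        using measurable_snd[of P ?Q] by (simp add: measurable_cong_sets)
    qed
    then show ?thesis
      by (simp add: pred_def vimage_def case_prod_beta Int_def conj_commute)
  qed
  have slice: "(\<lambda>x. (x, j)) -` (?g -` E \<inter> space (P \<Otimes>\<^sub>M ?Q))
      = {x \<in> space P. x(f j := z) \<in> E}" for j
    by (auto simp: space_pair_measure)
  have "emeasure (distr (P \<Otimes>\<^sub>M ?Q) (PiM I M) ?g) E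
      = emeasure (P \<Otimes>\<^sub>M ?Q) (?g -` E \<inter> space (P \<Otimes>\<^sub>M ?Q))"
    by (rule emeasure_distr_of_measurable_preimages[OF preimage E])
  also have "\<dots> = (\<integral>\<^sup>+j. ennreal (measure P {x \<in> space P. x(f j := z) \<in> E}) \<partial>?Q)"
    by (simp only: emeasure_pair_measure_alt2[OF preimage[OF E]] slice P.emeasure_eq_measure)
  also have "\<dots> = ennreal ((\<Sum>j\<in>J. measure P {x \<in> space P. x(f j := z) \<in> E}) / card J)"
    using J by (simp add: nn_integral_measure_pmf_finite sum_divide_distrib flip: sum_ennreal ennreal_mult')
  finally show ?thesis
    by (simp add: measure_def sum_nonneg)
qed

lemma indep_vars_PiM_components:
  assumes M: "\<And>i. i \<in> I \<Longrightarrow> prob_space (M i)"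
    and sets_eq: "\<And>i. i \<in> I \<Longrightarrow> sets (M i) = sets (N i)" and I: "I \<noteq> {}"
  shows "prob_space.indep_vars (PiM I M) N (\<lambda>i x. x i) I"
proof -
  interpret prob_space "PiM I M" by (rule prob_space_PiM) (rule M)
  have component: "(\<lambda>x. x i) \<in> PiM I M \<rightarrow>\<^sub>M N i" if "i \<in> I" for i
    using measurable_component_singleton[OF that, of M]
      measurable_cong_sets[OF refl sets_eq[OF that], of "PiM I M"] by simp
  have marginal: "distr (PiM I M) (N i) (\<lambda>x. x i) = M i" if "i \<in> I" for i
  proof -
    have "distr (PiM I M) (N i) (\<lambda>x. x i) = distr (PiM I M) (M i) (\<lambda>x. x i)"
      using sets_eq[OF that] by (intro distr_cong) simp_all
    also have "\<dots> = M i"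
      using M that by (rule distr_PiM_component)
    finally show ?thesis .
  qed
  have "distr (PiM I M) (PiM I N) (\<lambda>x. \<lambda>i\<in>I. x i) = distr (PiM I M) (PiM I M) (\<lambda>x. x)"
    using sets_eq by (intro distr_cong sets_PiM_cong) (simp_all add: space_PiM)
  also have "\<dots> = PiM I (\<lambda>i. distr (PiM I M) (N i) (\<lambda>x. x i))"
    by (simp only: distr_id) (rule PiM_cong; simp add: marginal)
  finally show ?thesis
    by (subst indep_vars_iff_distr_eq_PiM'[OF I component])
qed

lemma distributed_PiM_normal_standardized_sum:
  fixes I K :: "'i set" and mu sg :: real
  defines "P \<equiv> PiM I (\<lambda>_. density lborel (normal_density mu sg))"
  assumes sg: "sg > 0" and K: "K \<subseteq> I" "finite K" "K \<noteq> {}"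
  shows "distributed P lborel (\<lambda>x. ((\<Sum>i\<in>K. x i) - real (card K) * mu) / (sg * sqrt (real (card K))))
           std_normal_density"
proof -
  have normal: "prob_space (density lborel (normal_density mu sg))"
    using sg by (intro prob_space_normal_density) simp
  interpret prob_space P
    unfolding P_def by (intro prob_space_PiM normal)
  have "indep_vars (\<lambda>_. borel) (\<lambda>i x. x i) I"
    unfolding P_def using normal K by (intro indep_vars_PiM_components) auto
  then have indep: "indep_vars (\<lambda>_. borel) (\<lambda>i x. x i) K"
    using K(1) by (rule indep_vars_subset)
  have "distributed P lborel (\<lambda>x. x i) (normal_density mu sg)" if "i \<in> I" for i
  proof -
    have "distr P lborel (\<lambda>x. x i) = distr P (density lborel (normal_density mu sg)) (\<lambda>x. x i)"
      by (rule distr_cong) simp_all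
    also have "\<dots> = density lborel (normal_density mu sg)"
      unfolding P_def using normal that by (rule distr_PiM_component)
    finally show ?thesis
      using measurable_component_singleton[OF that, of "\<lambda>_. density lborel (normal_density mu sg)"]
      unfolding distributed_def P_def by simp
  qed
  then have "distributed P lborel (\<lambda>x. \<Sum>i\<in>K. x i)
      (normal_density (\<Sum>i\<in>K. mu) (sqrt (\<Sum>i\<in>K. sg\<^sup>2)))"
    using K sg by (intro sum_indep_normal indep) auto
  also have "sqrt (\<Sum>i\<in>K. sg\<^sup>2) = sg * sqrt (real (card K))"
    using sg by (simp add: real_sqrt_mult)
  also have "(\<Sum>i\<in>K. mu) = real (card K) * mu"
    by simp
  finally show ?thesis
    using sg K by (subst (asm) normal_standard_normal_convert) (simp_all add: card_gt_0_iff)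
qed

lemma logLR_complete_square:
  assumes "n \<noteq> 1" and "sg \<noteq> 0"
  shows "logLR n mu sg zstar tau x = - 1/2 * ln ((real n - 1) / real n) + (zstar - mu)\<^sup>2 / (2 * sg\<^sup>2)
           - real n / (2 * (real n - 1) * sg\<^sup>2) * (Xbar n tau x - zstar)\<^sup>2"
proof -
  define k where "k = 2 * (real n - 1) * sg\<^sup>2"
  define Y where "Y = Xbar n tau x - mu"
  define d where "d = zstar - mu"
  define l where "l = ln ((real n - 1) / real n)"
  have n1: "real n - 1 \<noteq> 0"
    using assms(1) by simp
  have k: "k \<noteq> 0"
    using n1 assms(2) by (simp add: k_def)
  have "d * real n / ((real n - 1) * sg\<^sup>2) = 2 * d * real n / k"
    unfolding k_def by (simp only: mult.assoc mult_divide_mult_cancel_left_if) simp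
  then have "logLR n mu sg zstar tau x = - 1/2 * l - real n / k * Y\<^sup>2 + 2 * d * real n / k * Y - d\<^sup>2 / k"
    unfolding logLR_def Y_def d_def l_def k_def by simp
  also have "\<dots> = - 1/2 * l + (- real n * Y\<^sup>2 + 2 * d * real n * Y - d\<^sup>2) / k"
    using k by (simp add: field_simps)
  also have "- real n * Y\<^sup>2 + 2 * d * real n * Y - d\<^sup>2 = (real n - 1) * d\<^sup>2 - real n * (Y - d)\<^sup>2"
    by (simp add: power2_eq_square algebra_simps)
  also have "- 1/2 * l + ((real n - 1) * d\<^sup>2 - real n * (Y - d)\<^sup>2) / k
      = - 1/2 * l + (real n - 1) * d\<^sup>2 / k - real n / k * (Y - d)\<^sup>2"
    using k by (simp add: field_simps)
  also have "(real n - 1) * d\<^sup>2 / k = d\<^sup>2 / (2 * sg\<^sup>2)"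
    using n1 assms(2) unfolding k_def by (simp add: field_simps)
  finally show ?thesis
    by (simp add: Y_def d_def k_def l_def)
qed

lemma Xbar_fun_upd:
  assumes "j \<in> {1..n}"
  shows "Xbar n tau (x((tau, j) := z)) = (z + (\<Sum>k\<in>{1..n} - {j}. x (tau, k))) / real n"
proof -
  have "(\<Sum>k = 1..n. (x((tau, j) := z)) (tau, k)) = z + (\<Sum>k\<in>{1..n} - {j}. (x((tau, j) := z)) (tau, k))"
    using assms by (subst sum.remove[of _ j]) auto
  also have "(\<Sum>k\<in>{1..n} - {j}. (x((tau, j) := z)) (tau, k)) = (\<Sum>k\<in>{1..n} - {j}. x (tau, k))"
    by (rule sum.cong) auto
  finally show ?thesis
    by (simp add: Xbar_def)
qed

lemma logLR_fun_upd_less_iff: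
  assumes n: "n \<ge> 2" and sg: "sg > 0" and j: "j \<in> {1..n}"
  shows "logLR n mu sg zstar tau (x((tau, j) := zstar)) < gamma \<longleftrightarrow>
    sqrt (real n * ((zstar - mu)\<^sup>2 / sg\<^sup>2 - ln ((real n - 1) / real n) - 2 * gamma))
      < \<bar>((\<Sum>k\<in>{1..n} - {j}. x (tau, k)) - (real n - 1) * mu) / (sg * sqrt (real n - 1))
         - sqrt (real n - 1) * (zstar - mu) / sg\<bar>"
proof -
  define S where "S = (\<Sum>k\<in>{1..n} - {j}. x (tau, k))"
  define A where "A = S - (real n - 1) * zstar"
  define e where "e = (S - (real n - 1) * mu) / (sg * sqrt (real n - 1)) - sqrt (real n - 1) * (zstar - mu) / sg"
  define m where "m = (zstar - mu)\<^sup>2 / sg\<^sup>2"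
  define l where "l = ln ((real n - 1) / real n)"
  have n1: "real n - 1 > 0"
    using n by simp
  have c: "sqrt (real n - 1) * (zstar - mu) / sg = (real n - 1) * (zstar - mu) / (sg * sqrt (real n - 1))"
    using n1 sg by (simp add: field_simps)
  have "e = A / (sg * sqrt (real n - 1))"
    unfolding e_def A_def c diff_divide_distrib[symmetric] by (simp add: algebra_simps)
  then have e2: "e\<^sup>2 = A\<^sup>2 / (sg\<^sup>2 * (real n - 1))"
    using n1 by (simp add: power_divide power_mult_distrib)
  have xbar: "Xbar n tau (x((tau, j) := zstar)) - zstar = A / real n"
    using j n unfolding A_def S_def by (simp add: Xbar_fun_upd field_simps)
  have "real n / (2 * (real n - 1) * sg\<^sup>2) * (A / real n)\<^sup>2 = e\<^sup>2 / real n / 2"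
    using n1 sg n unfolding e2 by (simp add: field_simps power2_eq_square)
  then have L: "logLR n mu sg zstar tau (x((tau, j) := zstar)) = - l / 2 + m / 2 - e\<^sup>2 / real n / 2"
    using n sg by (simp add: logLR_complete_square xbar m_def l_def)
  have "logLR n mu sg zstar tau (x((tau, j) := zstar)) < gamma \<longleftrightarrow> m - l - 2 * gamma < e\<^sup>2 / real n"
    unfolding L by auto
  also have "\<dots> \<longleftrightarrow> real n * (m - l - 2 * gamma) < e\<^sup>2"
    using n by (simp add: pos_less_divide_eq mult.commute)
  also have "\<dots> \<longleftrightarrow> sqrt (real n * (m - l - 2 * gamma)) < \<bar>e\<bar>"
    by (simp flip: real_sqrt_abs)
  finally show ?thesis
    unfolding e_def m_def l_def S_def .
qed

lemma logLR_measurable: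
  assumes "tau \<in> {1..T}"
  shows "logLR n mu sg zstar tau \<in> borel_measurable (PiM (idx T n) (\<lambda>_. borel))"
proof -
  have "(\<lambda>x. x (tau, k)) \<in> borel_measurable (PiM (idx T n) (\<lambda>_. borel :: real measure))" if "k \<in> {1..n}" for k
    using assms that by (intro measurable_component_singleton) (auto simp: idx_def)
  then have "(\<lambda>x. \<Sum>k = 1..n. x (tau, k)) \<in> borel_measurable (PiM (idx T n) (\<lambda>_. borel :: real measure))"
    by (rule borel_measurable_sum)
  then have "Xbar n tau \<in> borel_measurable (PiM (idx T n) (\<lambda>_. borel))"
    unfolding Xbar_def[abs_def] by measurable
  then show ?thesis
    unfolding logLR_def[abs_def] by measurable
qed

lemma measure_H0_logLR_fun_upd_less:
  fixes T n tau j :: nat and mu sg zstar gamma :: real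
  defines "c \<equiv> sqrt (real n - 1) * (zstar - mu) / sg"
    and "r \<equiv> sqrt (real n * ((zstar - mu)\<^sup>2 / sg\<^sup>2 - ln ((real n - 1) / real n) - 2 * gamma))"
  assumes n: "n \<ge> 2" and sg: "sg > 0" and tau: "tau \<in> {1..T}" and j: "j \<in> {1..n}"
    and gamma: "gamma \<le> 1/2 * ((zstar - mu)\<^sup>2 / sg\<^sup>2 - ln ((real n - 1) / real n))"
  shows "measure (H0 T n mu sg) {x \<in> space (H0 T n mu sg). logLR n mu sg zstar tau (x((tau, j) := zstar)) < gamma}
    = Phi (c - r) + Phi (- c - r)"
proof -
  define K where "K = (\<lambda>k. (tau, k)) ` ({1..n} - {j})"
  define W where "W x = ((\<Sum>i\<in>K. x i) - real (card K) * mu) / (sg * sqrt (real (card K)))"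
    for x :: "nat \<times> nat \<Rightarrow> real"
  have inj: "inj_on (\<lambda>k. (tau, k)) ({1..n} - {j})"
    by (auto simp: inj_on_def)
  have card: "real (card K) = real n - 1"
    using j n unfolding K_def card_image[OF inj] by (simp add: card_Diff_singleton)
  have K_nonempty: "K \<noteq> {}"
    using card n by auto
  have W: "W x = ((\<Sum>k\<in>{1..n} - {j}. x (tau, k)) - (real n - 1) * mu) / (sg * sqrt (real n - 1))" for x
    unfolding W_def card unfolding K_def sum.reindex[OF inj] by (simp add: comp_def)
  have "distributed (H0 T n mu sg) lborel W std_normal_density"
    unfolding H0_def W_def[abs_def] using sg tau K_nonempty
    by (intro distributed_PiM_normal_standardized_sum) (auto simp: K_def idx_def)
  then have W_meas: "W \<in> H0 T n mu sg \<rightarrow>\<^sub>M lborel"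
    and W_distr: "distr (H0 T n mu sg) lborel W = std_normal_distribution"
    by (auto simp: distributed_def)
  have B: "{w. r < \<bar>w - c\<bar>} \<in> sets lborel"
    by measurable
  have "{x \<in> space (H0 T n mu sg). logLR n mu sg zstar tau (x((tau, j) := zstar)) < gamma}
      = W -` {w. r < \<bar>w - c\<bar>} \<inter> space (H0 T n mu sg)"
    using logLR_fun_upd_less_iff[OF n sg j] by (auto simp: W c_def r_def)
  also have "measure (H0 T n mu sg) \<dots> = measure std_normal_distribution {w. r < \<bar>w - c\<bar>}"
    using measure_distr[OF W_meas B] by (simp add: W_distr)
  also have "\<dots> = Phi (c - r) + Phi (- c - r)"
    using gamma n by (intro measure_std_normal_abs_greater) (simp add: r_def)
  finally show ?thesis .
qed

lemma typeII_err_eq_Phi: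
  fixes T n tau :: nat and mu sg zstar gamma :: real
  defines "c \<equiv> sqrt (real n - 1) * (zstar - mu) / sg"
    and "r \<equiv> sqrt (real n * ((zstar - mu)\<^sup>2 / sg\<^sup>2 - ln ((real n - 1) / real n) - 2 * gamma))"
  assumes n: "n \<ge> 2" and sg: "sg > 0" and tau: "tau \<in> {1..T}"
    and gamma: "gamma \<le> 1/2 * ((zstar - mu)\<^sup>2 / sg\<^sup>2 - ln ((real n - 1) / real n))"
  shows "typeII_err T n mu sg zstar tau gamma = Phi (c - r) + Phi (- c - r)"
proof -
  define NB where "NB = PiM (idx T n) (\<lambda>_. borel :: real measure)"
  define E where "E = {x \<in> space NB. logLR n mu sg zstar tau x < gamma}"
  have E: "E \<in> sets NB"
    unfolding E_def NB_def using logLR_measurable[OF tau] by measurable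
  have H0: "prob_space (H0 T n mu sg)" "sets (H0 T n mu sg) = sets NB"
    using sg by (auto simp: H0_def NB_def intro!: prob_space_PiM prob_space_normal_density sets_PiM_cong)
  have "typeII_err T n mu sg zstar tau gamma = measure (H1 T n mu sg zstar tau) E"
    by (simp add: typeII_err_def E_def NB_def H1_def)
  also have "\<dots> = (\<Sum>j\<in>{1..n}. measure (H0 T n mu sg)
      {x \<in> space (H0 T n mu sg). x((tau, j) := zstar) \<in> E}) / card {1..n}"
    unfolding H1_def NB_def[symmetric] using n
      measure_distr_fun_upd_uniform[OF H0[unfolded NB_def] _ _ _ E[unfolded NB_def],
        of "\<lambda>j. (tau, j)" zstar "{1..n}"]
    by (simp add: NB_def)
  also have "\<dots> = Phi (c - r) + Phi (- c - r)"
  proof -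
    have "{x \<in> space (H0 T n mu sg). x((tau, j) := zstar) \<in> E}
        = {x \<in> space (H0 T n mu sg). logLR n mu sg zstar tau (x((tau, j) := zstar)) < gamma}"
      if "j \<in> {1..n}" for j
      using that tau sets_eq_imp_space_eq[OF H0(2)]
      by (auto simp: E_def NB_def space_PiM PiE_def extensional_def idx_def)
    then show ?thesis
      using measure_H0_logLR_fun_upd_less[OF n sg tau _ gamma] n by (simp add: c_def r_def)
  qed
  finally show ?thesis .
qed

theorem lemma3p6:
  fixes T n tau :: nat and mu sg zstar gamma :: real
  assumes "T \<ge> 1" and "n \<ge> 2" and "sg > 0" and "tau \<in> {1..T}"
    and "gamma \<le> 1/2 * ((zstar - mu)\<^sup>2 / sg\<^sup>2 - ln ((real n - 1) / real n))"
  shows "let mstar = (zstar - mu)\<^sup>2 / sg\<^sup>2;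
             a = sqrt (mstar * real n);
             b = sqrt ((real n - 1) * (mstar - ln (1 - 1 / real n) - 2 * gamma))
         in typeII_err T n mu sg zstar tau gamma =
              Phi (a * sqrt ((real n - 1) / real n) - b * sqrt (real n / (real n - 1)))
            + Phi (- a * sqrt ((real n - 1) / real n) - b * sqrt (real n / (real n - 1)))"
proof -
  define c where "c = sqrt (real n - 1) * (zstar - mu) / sg"
  define q where "q = (zstar - mu)\<^sup>2 / sg\<^sup>2 - ln ((real n - 1) / real n) - 2 * gamma"
  have n1: "real n - 1 > 0"
    using assms(2) by simp
  have prod: "(zstar - mu)\<^sup>2 / sg\<^sup>2 * real n * ((real n - 1) / real n)
      = ((zstar - mu) / sg)\<^sup>2 * (real n - 1)"
    using n1 by (simp add: power_divide)
  have "sqrt ((zstar - mu)\<^sup>2 / sg\<^sup>2 * real n) * sqrt ((real n - 1) / real n)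
      = \<bar>(zstar - mu) / sg\<bar> * sqrt (real n - 1)"
    by (simp only: real_sqrt_mult[symmetric] prod) (simp add: real_sqrt_mult)
  also have "\<dots> = \<bar>c\<bar>"
    using n1 assms(3) by (simp add: c_def abs_mult)
  finally have a: "sqrt ((zstar - mu)\<^sup>2 / sg\<^sup>2 * real n) * sqrt ((real n - 1) / real n) = \<bar>c\<bar>" .
  have ln_arg: "1 - 1 / real n = (real n - 1) / real n"
    using n1 by (simp add: field_simps)
  have "(real n - 1) * q * (real n / (real n - 1)) = real n * q"
    using n1 by simp
  then have b: "sqrt ((real n - 1) * ((zstar - mu)\<^sup>2 / sg\<^sup>2 - ln (1 - 1 / real n) - 2 * gamma))
      * sqrt (real n / (real n - 1)) = sqrt (real n * q)"
    unfolding ln_arg q_def[symmetric] by (simp only: real_sqrt_mult[symmetric])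
  have "Phi (\<bar>c\<bar> - sqrt (real n * q)) + Phi (- \<bar>c\<bar> - sqrt (real n * q))
      = Phi (c - sqrt (real n * q)) + Phi (- c - sqrt (real n * q))"
    by (cases "c \<ge> 0") auto
  then show ?thesis
    using typeII_err_eq_Phi[OF assms(2-5)] unfolding Let_def minus_mult_left[symmetric] a b
    by (simp add: c_def q_def)
qed

end
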